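(* Let $G$ be a finite connected graph. For any integers $0 \le f < n$, there exists an $f$-resilient synchronous message-passing algorithm for $n$ processes that solves graphical approximate agreement on $G$ in $\lfloor f/2 \rfloor + \lceil \log_2 \mathrm{diam}(G) \rceil + 1$ rounds.
   Context: Graphical approximate agreement on $G$: each process receives an input vertex and each non-crashed process outputs a vertex such that any two outputs are equal or adjacent in $G$ and every output lies on a shortest path in $G$ between two (not necessarily distinct) inputs. $\mathrm{diam}(G)$ is the maximum distance between two vertices of $G$. Synchronous message-passing model: $n$ fully connected processes, computation in synchronous rounds; in each round every process sends its entire state to every other process and messages from non-faulty processes arrive within the round; processes may crash. An $f$-resilient solution using $T$ rounds: in every execution with at most $f$ crashes, all non-crashed processes decide valid outputs by the end of round $T$. *)

theory Defs
  imports Main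
begin

definition finite_connected_graph :: "'v set \<Rightarrow> ('v \<Rightarrow> 'v \<Rightarrow> bool) \<Rightarrow> bool" where
  "finite_connected_graph V E \<longleftrightarrow>
     finite V \<and> V \<noteq> {} \<and>
     (\<forall>u v. E u v \<longrightarrow> u \<in> V \<and> v \<in> V) \<and>
     (\<forall>u v. E u v \<longrightarrow> E v u) \<and>
     (\<forall>u. \<not> E u u) \<and>
     (\<forall>u\<in>V. \<forall>v\<in>V. \<exists>k w. w 0 = u \<and> w k = v \<and> (\<forall>i<k. E (w i) (w (Suc i))))"

definition is_walk :: "('v \<Rightarrow> 'v \<Rightarrow> bool) \<Rightarrow> 'v \<Rightarrow> 'v \<Rightarrow> nat \<Rightarrow> bool" where
  "is_walk E u v k \<longleftrightarrow> (\<exists>w::nat \<Rightarrow> 'v. w 0 = u \<and> w k = v \<and> (\<forall>i<k. E (w i) (w (Suc i))))"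

definition gdist :: "('v \<Rightarrow> 'v \<Rightarrow> bool) \<Rightarrow> 'v \<Rightarrow> 'v \<Rightarrow> nat" where
  "gdist E u v = (LEAST k. is_walk E u v k)"

definition diam :: "'v set \<Rightarrow> ('v \<Rightarrow> 'v \<Rightarrow> bool) \<Rightarrow> nat" where
  "diam V E = Max {gdist E u v | u v. u \<in> V \<and> v \<in> V}"

definition on_shortest_path :: "('v \<Rightarrow> 'v \<Rightarrow> bool) \<Rightarrow> 'v \<Rightarrow> 'v \<Rightarrow> 'v \<Rightarrow> bool" where
  "on_shortest_path E a b y \<longleftrightarrow> gdist E a y + gdist E y b = gdist E a b"

text \<open>Ceiling of log base 2 on naturals: least k with d \<le> 2^k
  (equals ceil(log2 d) for d \<ge> 1; 0 for d = 0).\<close>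
definition clog2 :: "nat \<Rightarrow> nat" where
  "clog2 d = (LEAST k. d \<le> 2 ^ k)"

text \<open>Local view (full-information state) of a process: initial state is
  (process id, input); after a round it is (previous state, list of
  messages received from processes 0..n-1, None = nothing received).\<close>
datatype 'v view = V0 nat 'v | VS "'v view" "'v view option list"

text \<open>Failure pattern: crash j = None means j never crashes; crash j = Some r
  means j crashes in round r: it sends normally in rounds < r, in round r its
  message reaches exactly the processes i with dlv j i, and it sends nothing
  afterwards.\<close>
definition sends :: "(nat \<Rightarrow> nat option) \<Rightarrow> (nat \<Rightarrow> nat \<Rightarrow> bool) \<Rightarrow> nat \<Rightarrow> nat \<Rightarrow> nat \<Rightarrow> bool" where
  "sends crash dlv r j i \<longleftrightarrow>
     (case crash j of None \<Rightarrow> True | Some c \<Rightarrow> r < c \<or> (r = c \<and> dlv j i))"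

primrec view_at :: "nat \<Rightarrow> (nat \<Rightarrow> 'v) \<Rightarrow> (nat \<Rightarrow> nat option) \<Rightarrow> (nat \<Rightarrow> nat \<Rightarrow> bool)
                     \<Rightarrow> nat \<Rightarrow> nat \<Rightarrow> 'v view" where
  "view_at n x crash dlv 0 i = V0 i (x i)"
| "view_at n x crash dlv (Suc r) i =
     VS (view_at n x crash dlv r i)
        (map (\<lambda>j. if sends crash dlv (Suc r) j i then Some (view_at n x crash dlv r j) else None)
             [0..<n])"

text \<open>A deterministic algorithm deciding at the end of round T is a decision map
  on full-information views after T rounds (every algorithm in this model is
  simulated by the full-information protocol).\<close>
definition solves_GAA :: "'v set \<Rightarrow> ('v \<Rightarrow> 'v \<Rightarrow> bool) \<Rightarrow> nat \<Rightarrow> nat \<Rightarrow> nat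
                          \<Rightarrow> ('v view \<Rightarrow> 'v) \<Rightarrow> bool" where
  "solves_GAA V E n f T dec \<longleftrightarrow>
     (\<forall>(x::nat \<Rightarrow> 'v) crash dlv.
        (\<forall>j<n. x j \<in> V) \<and> card {j. j < n \<and> crash j \<noteq> None} \<le> f \<longrightarrow>
        (let out = (\<lambda>i. dec (view_at n x crash dlv T i));
             correct = {i. i < n \<and> crash i = None}
         in (\<forall>i\<in>correct. out i \<in> V) \<and>
            (\<forall>i\<in>correct. \<forall>i'\<in>correct. out i = out i' \<or> E (out i) (out i')) \<and>
            (\<forall>i\<in>correct. \<exists>a<n. \<exists>b<n. on_shortest_path E (x a) (x b) (out i))))"

end

theory Submission
  imports Defs Complex_Main
begin

text \<open>Phase one (\<open>f div 2 + 1\<close> rounds) is min-consensus on indices of input vertices.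
  Some round of phase one has at most one crash, and after it every process holds one of
  at most two input indices \<open>m1 \<le> m2\<close>. Phase two is approximate agreement on a position in
  \<open>[0, 1]\<close> along a fixed geodesic between the vertices indexed \<open>m1\<close> and \<open>m2\<close>: each process
  moves to the midpoint of the extreme positions it receives. All processes hear a common
  correct process, so the spread halves in every round and after \<open>clog2 (diam V E)\<close> rounds
  it is at most \<open>1 / diam V E\<close>; scaling by the length of the geodesic and rounding down
  then yields equal or consecutive vertices of it.\<close>

subsection \<open>Walks and geodesics\<close>

lemma is_walk_append:
  assumes "is_walk E a b k" "is_walk E b c l"
  shows "is_walk E a c (k + l)"
proof -
  obtain w1 where w1: "w1 0 = a" "w1 k = b" "\<forall>i<k. E (w1 i) (w1 (Suc i))"
    using assms(1) unfolding is_walk_def by blast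
  obtain w2 where w2: "w2 0 = b" "w2 l = c" "\<forall>i<l. E (w2 i) (w2 (Suc i))"
    using assms(2) unfolding is_walk_def by blast
  define w where "w i = (if i \<le> k then w1 i else w2 (i - k))" for i
  have "E (w i) (w (Suc i))" if "i < k + l" for i
  proof (cases "i < k")
    case True
    then show ?thesis using w1 by (auto simp: w_def)
  next
    case False
    then have "i - k < l" "Suc i - k = Suc (i - k)" using \<open>i < k + l\<close> by auto
    then show ?thesis using w2 False w1(2) by (auto simp: w_def)
  qed
  moreover have "w 0 = a" "w (k + l) = c" using w1 w2 by (auto simp: w_def)
  ultimately show ?thesis unfolding is_walk_def by blast
qed

lemma gdist_le: "is_walk E u v k \<Longrightarrow> gdist E u v \<le> k"
  unfolding gdist_def by (rule Least_le)

lemma gdist_self: "gdist E u u = 0"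
proof -
  have "is_walk E u u 0" unfolding is_walk_def by auto
  from gdist_le[OF this] show ?thesis by simp
qed

context
  fixes V :: "'v set" and E :: "'v \<Rightarrow> 'v \<Rightarrow> bool"
  assumes G: "finite_connected_graph V E"
begin

lemma is_walk_gdist:
  assumes "u \<in> V" "v \<in> V"
  shows "is_walk E u v (gdist E u v)"
proof -
  have "\<exists>k. is_walk E u v k"
    using G assms unfolding finite_connected_graph_def is_walk_def by blast
  then show ?thesis unfolding gdist_def by (rule LeastI_ex)
qed

lemma gdist_triangle:
  assumes "a \<in> V" "b \<in> V" "c \<in> V"
  shows "gdist E a c \<le> gdist E a b + gdist E b c"
  using gdist_le[OF is_walk_append[OF is_walk_gdist[OF assms(1,2)] is_walk_gdist[OF assms(2,3)]]] .

lemma gdist_le_diam: "u \<in> V \<Longrightarrow> v \<in> V \<Longrightarrow> gdist E u v \<le> diam V E"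
proof -
  assume uv: "u \<in> V" "v \<in> V"
  have "{gdist E u v | u v. u \<in> V \<and> v \<in> V} = (\<lambda>(u, v). gdist E u v) ` (V \<times> V)" by auto
  then have "finite {gdist E u v | u v. u \<in> V \<and> v \<in> V}"
    using G unfolding finite_connected_graph_def by simp
  then show ?thesis unfolding diam_def using uv by (intro Max_ge) auto
qed

end

text \<open>The choice depends only on the endpoints, so all processes use the same geodesic.\<close>
definition geodesic :: "('v \<Rightarrow> 'v \<Rightarrow> bool) \<Rightarrow> 'v \<Rightarrow> 'v \<Rightarrow> nat \<Rightarrow> 'v" where
  "geodesic E u v = (SOME w. w 0 = u \<and> w (gdist E u v) = v \<and> (\<forall>i<gdist E u v. E (w i) (w (Suc i))))"

context
  fixes V :: "'v set" and E :: "'v \<Rightarrow> 'v \<Rightarrow> bool" and u v :: 'v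
  assumes G: "finite_connected_graph V E" and uv: "u \<in> V" "v \<in> V"
begin

lemma geodesic_walk:
  "geodesic E u v 0 = u" "geodesic E u v (gdist E u v) = v"
  "\<And>i. i < gdist E u v \<Longrightarrow> E (geodesic E u v i) (geodesic E u v (Suc i))"
proof -
  have "\<exists>w. w 0 = u \<and> w (gdist E u v) = v \<and> (\<forall>i<gdist E u v. E (w i) (w (Suc i)))"
    using is_walk_gdist[OF G uv] unfolding is_walk_def .
  then have "geodesic E u v 0 = u \<and> geodesic E u v (gdist E u v) = v
      \<and> (\<forall>i<gdist E u v. E (geodesic E u v i) (geodesic E u v (Suc i)))"
    unfolding geodesic_def by (rule someI_ex)
  then show "geodesic E u v 0 = u" "geodesic E u v (gdist E u v) = v"
    "\<And>i. i < gdist E u v \<Longrightarrow> E (geodesic E u v i) (geodesic E u v (Suc i))"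
    by blast+
qed

lemma geodesic_in_V:
  assumes "k \<le> gdist E u v"
  shows "geodesic E u v k \<in> V"
proof (cases k)
  case (Suc k')
  then have "E (geodesic E u v k') (geodesic E u v k)" using geodesic_walk(3) assms by auto
  then show ?thesis using G unfolding finite_connected_graph_def by blast
qed (use geodesic_walk(1) uv in auto)

lemma on_shortest_path_geodesic:
  assumes k: "k \<le> gdist E u v"
  shows "on_shortest_path E u v (geodesic E u v k)"
proof -
  let ?p = "geodesic E u v"
  have "is_walk E u (?p k) k" unfolding is_walk_def using geodesic_walk k
    by (intro exI[of _ ?p]) auto
  then have "gdist E u (?p k) \<le> k" by (rule gdist_le)
  moreover have "is_walk E (?p k) v (gdist E u v - k)" unfolding is_walk_def using geodesic_walk k
    by (intro exI[of _ "\<lambda>i. ?p (k + i)"]) auto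
  then have "gdist E (?p k) v \<le> gdist E u v - k" by (rule gdist_le)
  moreover have "gdist E u v \<le> gdist E u (?p k) + gdist E (?p k) v"
    using gdist_triangle[OF G uv(1) geodesic_in_V[OF k] uv(2)] .
  ultimately show ?thesis unfolding on_shortest_path_def using k by linarith
qed

lemma geodesic_adjacent:
  assumes "k \<le> gdist E u v" "k' \<le> gdist E u v" "k \<le> k' + 1" "k' \<le> k + 1"
  shows "geodesic E u v k = geodesic E u v k' \<or> E (geodesic E u v k) (geodesic E u v k')"
proof -
  have sym: "\<And>a b. E a b \<Longrightarrow> E b a" using G unfolding finite_connected_graph_def by blast
  consider "k = k'" | "k' = Suc k" | "k = Suc k'" using assms by linarith
  then show ?thesis
  proof cases
    case 2
    then show ?thesis using geodesic_walk(3) assms by auto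
  next
    case 3
    then show ?thesis using geodesic_walk(3) assms sym[of "geodesic E u v k'"] by auto
  qed simp
qed

end

lemma le_two_power_clog2: "d \<le> 2 ^ clog2 d"
proof -
  have "d \<le> 2 ^ d" using less_exp[of d] by simp
  then show ?thesis unfolding clog2_def by (rule LeastI)
qed

lemma subset_pair_card_ge_2:
  assumes "W \<subseteq> {a, b}" "2 \<le> card W"
  shows "W = {a, b}" "a \<noteq> b"
proof -
  have "card W \<le> card {a, b}" using assms(1) by (intro card_mono) auto
  then show ne: "a \<noteq> b" using assms(2) by (cases "a = b") auto
  show "W = {a, b}"
  proof (rule ccontr)
    assume "W \<noteq> {a, b}"
    then have "card W < card {a, b}" using assms(1) by (intro psubset_card_mono) auto
    then show False using assms(2) ne by simp
  qed
qed

lemma subset_pair_card_lt_2: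
  assumes "W \<subseteq> {a, b}" "W \<noteq> {}" "\<not> 2 \<le> card W"
  obtains w where "W = {w}"
proof -
  have "finite W" using assms(1) finite_subset by blast
  then have "card W = 1" using assms by (cases "card W") auto
  then show ?thesis using that card_1_singletonE by blast
qed

lemma nat_floor_le_Suc:
  fixes a b :: real
  assumes "\<bar>a - b\<bar> \<le> 1" "0 \<le> a" "0 \<le> b"
  shows "nat \<lfloor>a\<rfloor> \<le> nat \<lfloor>b\<rfloor> + 1"
proof -
  have "\<lfloor>a\<rfloor> \<le> \<lfloor>b + 1\<rfloor>" using assms by (intro floor_mono) auto
  then show ?thesis using assms by auto
qed

lemma midpoint_Min_Max_bounds:
  fixes G :: "real set"
  assumes "finite G" "g0 \<in> G" "\<forall>g\<in>G. L \<le> g \<and> g \<le> L + w"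
  shows "(L + g0) / 2 \<le> (Min G + Max G) / 2" "(Min G + Max G) / 2 \<le> (L + g0) / 2 + w / 2"
proof -
  have "Min G \<le> g0" "g0 \<le> Max G" using assms by auto
  moreover have "L \<le> Min G" "Max G \<le> L + w" using assms by (auto intro: Min.boundedI Max.boundedI)
  ultimately show "(L + g0) / 2 \<le> (Min G + Max G) / 2" "(Min G + Max G) / 2 \<le> (L + g0) / 2 + w / 2"
    by (simp_all add: field_simps)
qed

lemma exists_round_with_le_one_crash:
  fixes crash :: "nat \<Rightarrow> nat option"
  assumes "card {j. j < n \<and> crash j \<noteq> None} \<le> f" "f < 2 * R"
  shows "\<exists>q<R. card {j. j < n \<and> crash j = Some (Suc q)} \<le> 1"
proof (rule ccontr)
  let ?A = "\<lambda>q. {j. j < n \<and> crash j = Some (Suc q)}"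
  assume "\<not> ?thesis"
  then have "(\<Sum>q<R. 2) \<le> (\<Sum>q<R. card (?A q))" by (intro sum_mono) auto
  also have "\<dots> = card (\<Union>q<R. ?A q)" by (intro card_UN_disjoint[symmetric]) auto
  also have "\<dots> \<le> card {j. j < n \<and> crash j \<noteq> None}" by (intro card_mono) auto
  finally show False using assms by simp
qed

subsection \<open>The protocol\<close>

primrec view_depth :: "'v view \<Rightarrow> nat" where
  "view_depth (V0 i a) = 0"
| "view_depth (VS w ms) = Suc (view_depth w)"

text \<open>A state \<open>(W, c)\<close> consists of the set \<open>W\<close> of candidate indices known and the
  position \<open>c\<close> along the geodesic from \<open>Min W\<close> to \<open>Max W\<close>; during the first \<open>R1\<close> rounds
  \<open>W\<close> is the singleton of the least candidate heard of. A received state with a single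
  candidate sits at position 0 or 1, depending on whether its candidate is the least one
  the receiver knows.\<close>
definition received_position :: "nat set \<Rightarrow> nat set \<times> real \<Rightarrow> real" where
  "received_position W s =
     (if 2 \<le> card (fst s) then snd s else if Min (fst s) = Min W then 0 else 1)"

definition gaa_step :: "nat \<Rightarrow> nat \<Rightarrow> (nat set \<times> real) set \<Rightarrow> nat set \<times> real" where
  "gaa_step R1 r S =
     (if r < R1 then ({Min (\<Union>(fst ` S))}, 0)
      else let W = \<Union>(fst ` S); C = received_position W ` S in (W, (Min C + Max C) / 2))"

primrec gaa_state :: "('v \<Rightarrow> nat) \<Rightarrow> nat \<Rightarrow> 'v view \<Rightarrow> nat set \<times> real" where
  "gaa_state idx R1 (V0 i a) = ({idx a}, 0)"
| "gaa_state idx R1 (VS w ms) =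
     gaa_step R1 (view_depth w) {s. Some s \<in> set (map (map_option (gaa_state idx R1)) ms)}"

definition gaa_output :: "'v set \<Rightarrow> ('v \<Rightarrow> 'v \<Rightarrow> bool) \<Rightarrow> ('v \<Rightarrow> nat) \<Rightarrow> nat set \<times> real \<Rightarrow> 'v" where
  "gaa_output V E idx s =
     (let a = inv_into V idx (Min (fst s)); b = inv_into V idx (Max (fst s))
      in geodesic E a b (nat \<lfloor>snd s * real (gdist E a b)\<rfloor>))"

lemma view_depth_view_at: "view_depth (view_at n x crash dlv r i) = r"
  by (induction r arbitrary: i) auto

lemma gaa_state_view_at_Suc:
  "gaa_state idx R1 (view_at n x crash dlv (Suc r) i) =
     gaa_step R1 r ((\<lambda>j. gaa_state idx R1 (view_at n x crash dlv r j)) `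
                    {j. j < n \<and> sends crash dlv (Suc r) j i})"
proof -
  have "{s. Some s \<in> set (map (map_option (gaa_state idx R1))
          (map (\<lambda>j. if sends crash dlv (Suc r) j i then Some (view_at n x crash dlv r j) else None)
            [0..<n]))}
     = (\<lambda>j. gaa_state idx R1 (view_at n x crash dlv r j)) ` {j. j < n \<and> sends crash dlv (Suc r) j i}"
    by (auto split: if_splits)
  then show ?thesis by (simp add: view_depth_view_at)
qed

subsection \<open>Phase one: min-consensus on candidates\<close>

locale gaa_execution =
  fixes V :: "'v set" and E :: "'v \<Rightarrow> 'v \<Rightarrow> bool" and n f :: nat
    and x :: "nat \<Rightarrow> 'v" and crash :: "nat \<Rightarrow> nat option" and dlv :: "nat \<Rightarrow> nat \<Rightarrow> bool"
    and idx :: "'v \<Rightarrow> nat"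
  assumes G: "finite_connected_graph V E" and f_less_n: "f < n" and inputs: "\<forall>j<n. x j \<in> V"
    and crashes: "card {j. j < n \<and> crash j \<noteq> None} \<le> f" and inj_idx: "inj_on idx V"
begin

definition "R1 = f div 2 + 1"
definition "st r i = gaa_state idx R1 (view_at n x crash dlv r i)"
definition "senders r i = {j. j < n \<and> sends crash dlv (Suc r) j i}"
definition "candidate r j = Min (fst (st r j))"

lemma st_Suc: "st (Suc r) i = gaa_step R1 r (st r ` senders r i)"
  unfolding st_def senders_def by (rule gaa_state_view_at_Suc)

lemma exists_correct: "\<exists>c<n. crash c = None"
proof (rule ccontr)
  assume "\<not> ?thesis"
  then have "{j. j < n \<and> crash j \<noteq> None} = {..<n}" by auto
  then show False using crashes f_less_n by simp
qed

lemma correct_in_senders: "c < n \<Longrightarrow> crash c = None \<Longrightarrow> c \<in> senders r i"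
  unfolding senders_def sends_def by auto

lemma senders_subset: "senders r i \<subseteq> {..<n}"
  unfolding senders_def by auto

lemma finite_senders: "finite (senders r i)"
  using senders_subset finite_subset by blast

lemma senders_nonempty: "senders r i \<noteq> {}"
  using exists_correct correct_in_senders by blast

lemma Min_in_image_senders: "Min (g ` senders r i) \<in> g ` senders r i"
  using finite_senders senders_nonempty by (intro Min_in) auto

lemma st_Suc_phase1:
  assumes "r < R1" "\<And>j'. j' \<in> senders r j \<Longrightarrow> fst (st r j') = {candidate r j'}"
  shows "st (Suc r) j = ({Min (candidate r ` senders r j)}, 0)"
proof -
  from assms(2) have "\<Union>(fst ` st r ` senders r j) = candidate r ` senders r j" by auto
  then show ?thesis using assms(1) by (simp add: st_Suc gaa_step_def)
qed

lemma phase1_state: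
  "r \<le> R1 \<Longrightarrow> j < n \<Longrightarrow> st r j = ({candidate r j}, 0) \<and> candidate r j \<in> idx ` x ` {..<n}"
proof (induction r arbitrary: j)
  case 0
  then show ?case by (simp add: st_def candidate_def)
next
  case (Suc r)
  have IH: "st r j' = ({candidate r j'}, 0) \<and> candidate r j' \<in> idx ` x ` {..<n}"
    if "j' \<in> senders r j" for j'
    using Suc senders_subset[of r j] that by auto
  with Suc.prems have st: "st (Suc r) j = ({Min (candidate r ` senders r j)}, 0)"
    by (intro st_Suc_phase1) auto
  obtain j' where "j' \<in> senders r j" "Min (candidate r ` senders r j) = candidate r j'"
    using Min_in_image_senders[of "candidate r" r j] by auto
  then show ?case using st IH by (simp add: candidate_def[of "Suc r"])
qed

lemma candidate_Suc:
  assumes "r < R1"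
  shows "candidate (Suc r) j = Min (candidate r ` senders r j)"
proof -
  have "fst (st r j') = {candidate r j'}" if "j' \<in> senders r j" for j'
    using phase1_state[of r j'] assms senders_subset[of r j] that by auto
  with assms show ?thesis unfolding candidate_def[of "Suc r"] by (simp add: st_Suc_phase1)
qed

lemma exists_clean_round:
  obtains q p where "q < R1" "p < n" "{j. j < n \<and> crash j = Some (Suc q)} \<subseteq> {p}"
proof -
  have "f < 2 * R1" unfolding R1_def by presburger
  then obtain q where q: "q < R1" "card {j. j < n \<and> crash j = Some (Suc q)} \<le> 1"
    using exists_round_with_le_one_crash[OF crashes] by blast
  let ?A = "{j. j < n \<and> crash j = Some (Suc q)}"
  have "\<exists>p<n. ?A \<subseteq> {p}"
  proof (cases "?A = {}")
    case True
    then show ?thesis using f_less_n by blast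
  next
    case False
    then obtain p where "p \<in> ?A" by blast
    moreover have "\<forall>a\<in>?A. \<forall>b\<in>?A. a = b"
      using q(2) card_le_Suc0_iff_eq[of ?A] by simp
    ultimately show ?thesis by blast
  qed
  then show ?thesis using that q by blast
qed

end

subsection \<open>Phase two: approximate agreement along a geodesic\<close>

locale gaa_clean_execution = gaa_execution +
  fixes q p
  assumes q_less_R1: "q < R1" and p_less_n: "p < n"
    and clean: "{j. j < n \<and> crash j = Some (Suc q)} \<subseteq> {p}"
begin

text \<open>Round \<open>Suc q\<close> has at most one crashing process \<open>p\<close>, so in it every process
  receives exactly the survivors' candidates, possibly together with that of \<open>p\<close>:
  its new candidate is \<open>m2\<close> or \<open>m1\<close>.\<close>
definition "survivors = {j. j < n \<and> (crash j = None \<or> (\<exists>c. crash j = Some c \<and> Suc q < c))}"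
definition "m2 = Min (candidate q ` survivors)"
definition "m1 = min m2 (candidate q p)"

lemma survivors_senders: "survivors \<subseteq> senders q i \<and> senders q i \<subseteq> insert p survivors"
  using clean unfolding survivors_def senders_def sends_def by (auto split: option.splits)

lemma finite_survivors: "finite survivors"
  unfolding survivors_def by auto

lemma survivors_nonempty: "survivors \<noteq> {}"
  using exists_correct unfolding survivors_def by auto

lemma candidate_after_clean_round: "candidate (Suc q) i \<in> {m1, m2}"
proof -
  have cand: "candidate (Suc q) i = Min (candidate q ` senders q i)"
    using candidate_Suc[OF q_less_R1] .
  have fin: "finite (candidate q ` survivors)" "candidate q ` survivors \<noteq> {}"
    using finite_survivors survivors_nonempty by auto
  consider "senders q i = survivors" | "senders q i = insert p survivors"
    using survivors_senders[of i] by blast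
  then show ?thesis
  proof cases
    case 1
    then show ?thesis using cand unfolding m2_def by simp
  next
    case 2
    then show ?thesis using cand Min_insert[OF fin] unfolding m1_def m2_def by (simp add: min.commute)
  qed
qed

lemma candidate_two_valued: "Suc q \<le> r \<Longrightarrow> r \<le> R1 \<Longrightarrow> candidate r i \<in> {m1, m2}"
proof (induction r arbitrary: i rule: dec_induct)
  case base
  then show ?case using candidate_after_clean_round by blast
next
  case (step r)
  then have "candidate r ` senders r i \<subseteq> {m1, m2}" by auto
  then show ?case using candidate_Suc[of r i] step Min_in_image_senders[of "candidate r" r i] by auto
qed

lemma m1_m2_inputs: "m1 \<in> idx ` x ` {..<n}" "m2 \<in> idx ` x ` {..<n}"
proof -
  have input: "candidate q j \<in> idx ` x ` {..<n}" if "j < n" for j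
    using phase1_state[of q j] q_less_R1 that by simp
  have "m2 \<in> candidate q ` survivors"
    unfolding m2_def using finite_survivors survivors_nonempty by (intro Min_in) auto
  then obtain j where "j \<in> survivors" "m2 = candidate q j" by blast
  then show m2: "m2 \<in> idx ` x ` {..<n}" using input unfolding survivors_def by simp
  show "m1 \<in> idx ` x ` {..<n}" using m2 input[OF p_less_n] unfolding m1_def min_def by simp
qed

lemma m1_le_m2: "m1 \<le> m2"
  unfolding m1_def by simp

definition position :: "nat set \<times> real \<Rightarrow> real" where
  "position s = (if 2 \<le> card (fst s) then snd s else if Min (fst s) = m1 then 0 else 1)"

definition "valid s \<longleftrightarrow> fst s \<subseteq> {m1, m2} \<and> fst s \<noteq> {} \<and> 0 \<le> position s \<and> position s \<le> 1"

lemma gaa_step_midpoint: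
  assumes r: "R1 \<le> r" and S: "finite S" "S \<noteq> {}" "\<forall>s\<in>S. valid s"
  shows "valid (gaa_step R1 r S)"
    "position (gaa_step R1 r S) = (Min (position ` S) + Max (position ` S)) / 2"
proof -
  define W where "W = \<Union>(fst ` S)"
  define C where "C = received_position W ` S"
  have step: "gaa_step R1 r S = (W, (Min C + Max C) / 2)"
    using r unfolding gaa_step_def W_def C_def Let_def by simp
  have W: "W \<subseteq> {m1, m2}" "W \<noteq> {}" using S unfolding W_def valid_def by auto
  have fin: "finite (position ` S)" "position ` S \<noteq> {}" using S by auto
  have "\<forall>g\<in>position ` S. 0 \<le> g \<and> g \<le> 1" using S(3) unfolding valid_def by blast
  then have bounds: "0 \<le> Min (position ` S)" "Max (position ` S) \<le> 1"
    unfolding Min_ge_iff[OF fin] Max_le_iff[OF fin] by auto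
  have Min_le_Max: "Min (position ` S) \<le> Max (position ` S)"
    using Min_le[OF fin(1) Max_in[OF fin]] .
  have "position (gaa_step R1 r S) = (Min (position ` S) + Max (position ` S)) / 2"
  proof (cases "2 \<le> card W")
    case True
    with W(1) have "W = {m1, m2}" by (rule subset_pair_card_ge_2)
    then have "Min W = m1" using m1_le_m2 by simp
    then have "received_position W s = position s" for s
      unfolding received_position_def position_def by simp
    then have "C = position ` S" unfolding C_def by simp
    moreover have "position (gaa_step R1 r S) = (Min C + Max C) / 2"
      using True unfolding step position_def by simp
    ultimately show ?thesis by simp
  next
    case False
    with W obtain w where w: "W = {w}" by (rule subset_pair_card_lt_2)
    define \<gamma> where "\<gamma> = (if w = m1 then 0 else (1::real))"
    have "position s = \<gamma>" if "s \<in> S" for s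
    proof -
      have "fst s \<subseteq> {w}" using that w unfolding W_def by blast
      moreover have "fst s \<noteq> {}" using that S(3) unfolding valid_def by blast
      ultimately have "fst s = {w}" by (simp add: subset_singleton_iff)
      then show ?thesis unfolding position_def \<gamma>_def by simp
    qed
    then have "position ` S = {\<gamma>}" using S(2) by auto
    moreover have "position (gaa_step R1 r S) = \<gamma>"
      unfolding step w position_def \<gamma>_def by simp
    ultimately show ?thesis by simp
  qed
  with bounds Min_le_Max show "valid (gaa_step R1 r S)"
    "position (gaa_step R1 r S) = (Min (position ` S) + Max (position ` S)) / 2"
    using step W unfolding valid_def by auto
qed

lemma phase2_spread:
  "\<exists>L. \<forall>j<n. valid (st (R1 + s) j) \<and> L \<le> position (st (R1 + s) j)
                \<and> position (st (R1 + s) j) \<le> L + 1 / 2 ^ s"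
proof (induction s)
  case 0
  have "valid (st R1 j) \<and> 0 \<le> position (st R1 j) \<and> position (st R1 j) \<le> 0 + 1 / 2 ^ 0"
    if "j < n" for j
  proof -
    have "st R1 j = ({candidate R1 j}, 0)" using phase1_state[of R1 j] that by simp
    moreover have "candidate R1 j \<in> {m1, m2}" using candidate_two_valued q_less_R1 by simp
    ultimately show ?thesis unfolding valid_def position_def by auto
  qed
  then show ?case by (intro exI[of _ 0]) simp
next
  case (Suc s)
  then obtain L where L: "\<forall>j<n. valid (st (R1 + s) j) \<and> L \<le> position (st (R1 + s) j)
                             \<and> position (st (R1 + s) j) \<le> L + 1 / 2 ^ s"
    by blast
  obtain c where c: "c < n" "crash c = None" using exists_correct by blast
  define g0 where "g0 = position (st (R1 + s) c)"
  have "valid (st (R1 + Suc s) j) \<and> (L + g0) / 2 \<le> position (st (R1 + Suc s) j)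
          \<and> position (st (R1 + Suc s) j) \<le> (L + g0) / 2 + 1 / 2 ^ Suc s"
    if "j < n" for j
  proof -
    let ?S = "st (R1 + s) ` senders (R1 + s) j"
    have sub: "senders (R1 + s) j \<subseteq> {..<n}" by (rule senders_subset)
    have S: "finite ?S" "?S \<noteq> {}" "\<forall>s'\<in>?S. valid s'"
      using finite_senders senders_nonempty L sub by auto
    have "g0 \<in> position ` ?S"
      unfolding g0_def using correct_in_senders[OF c, of "R1 + s" j] by blast
    moreover have "\<forall>g\<in>position ` ?S. L \<le> g \<and> g \<le> L + 1 / 2 ^ s"
      using L sub by blast
    ultimately have "(L + g0) / 2 \<le> (Min (position ` ?S) + Max (position ` ?S)) / 2"
      "(Min (position ` ?S) + Max (position ` ?S)) / 2 \<le> (L + g0) / 2 + 1 / 2 ^ Suc s"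
      using midpoint_Min_Max_bounds[of "position ` ?S" g0 L "1 / 2 ^ s"] S(1) by simp_all
    moreover have "valid (st (R1 + Suc s) j)"
      "position (st (R1 + Suc s) j) = (Min (position ` ?S) + Max (position ` ?S)) / 2"
      using gaa_step_midpoint[of "R1 + s", OF _ S] st_Suc[of "R1 + s" j] by simp_all
    ultimately show ?thesis by (simp only: simp_thms)
  qed
  then show ?case by (intro exI[of _ "(L + g0) / 2"]) blast
qed

definition "u = inv_into V idx m1"
definition "v = inv_into V idx m2"

lemma u_v_inputs: "\<exists>a<n. u = x a" "\<exists>b<n. v = x b" "u \<in> V" "v \<in> V"
proof -
  have input: "\<exists>a<n. inv_into V idx m = x a" if m: "m \<in> idx ` x ` {..<n}" for m
  proof -
    obtain a where "a < n" "m = idx (x a)" using m by blast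
    then show ?thesis using inv_into_f_f[OF inj_idx] inputs by auto
  qed
  show u: "\<exists>a<n. u = x a" using input[OF m1_m2_inputs(1)] unfolding u_def .
  show v: "\<exists>b<n. v = x b" using input[OF m1_m2_inputs(2)] unfolding v_def .
  show "u \<in> V" "v \<in> V" using u v inputs by auto
qed

lemma gaa_output_valid:
  assumes "valid s"
  shows "gaa_output V E idx s = geodesic E u v (nat \<lfloor>position s * real (gdist E u v)\<rfloor>)"
proof (cases "2 \<le> card (fst s)")
  case True
  have W: "fst s \<subseteq> {m1, m2}" using assms unfolding valid_def by simp
  from W True have "fst s = {m1, m2}" by (rule subset_pair_card_ge_2)
  then have "Min (fst s) = m1" "Max (fst s) = m2" using m1_le_m2 by auto
  then show ?thesis using True unfolding gaa_output_def position_def u_def v_def by (simp add: Let_def)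
next
  case False
  have W: "fst s \<subseteq> {m1, m2}" "fst s \<noteq> {}" using assms unfolding valid_def by simp_all
  with False obtain w where w: "fst s = {w}" by (elim subset_pair_card_lt_2)
  have "gaa_output V E idx s = inv_into V idx w"
    using geodesic_walk(1)[OF G, of "inv_into V idx w" "inv_into V idx w"] W w u_v_inputs(3,4)
    unfolding gaa_output_def u_def v_def by (auto simp: gdist_self Let_def)
  moreover have "w = m1 \<or> w = m2" using W(1) w by auto
  ultimately show ?thesis
    using False w geodesic_walk(1,2)[OF G u_v_inputs(3,4)]
    unfolding position_def u_def v_def by auto
qed

lemma outputs_on_geodesic:
  assumes "diam V E \<le> 2 ^ K"
  obtains k where "\<And>j. j < n \<Longrightarrow> gaa_output V E idx (st (R1 + K) j) = geodesic E u v (k j)"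
    "\<And>j. j < n \<Longrightarrow> k j \<le> gdist E u v"
    "\<And>i j. i < n \<Longrightarrow> j < n \<Longrightarrow> k i \<le> k j + 1"
proof -
  obtain L where L: "\<forall>j<n. valid (st (R1 + K) j) \<and> L \<le> position (st (R1 + K) j)
                         \<and> position (st (R1 + K) j) \<le> L + 1 / 2 ^ K"
    using phase2_spread by blast
  define D where "D = gdist E u v"
  let ?c = "\<lambda>j. position (st (R1 + K) j)"
  have c01: "0 \<le> ?c j" "?c j \<le> 1" if "j < n" for j using L that unfolding valid_def by auto
  have "D \<le> 2 ^ K" using gdist_le_diam[OF G u_v_inputs(3,4)] assms unfolding D_def by simp
  then have D: "real D \<le> 2 ^ K" by (metis of_nat_le_iff of_nat_numeral of_nat_power)
  show ?thesis
  proof (rule that[of "\<lambda>j. nat \<lfloor>?c j * D\<rfloor>"])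
    fix j assume "j < n"
    then show "gaa_output V E idx (st (R1 + K) j) = geodesic E u v (nat \<lfloor>?c j * D\<rfloor>)"
      using L gaa_output_valid unfolding D_def by simp
    have "?c j * D \<le> D" using c01[OF \<open>j < n\<close>] by (intro mult_left_le_one_le) auto
    then show "nat \<lfloor>?c j * D\<rfloor> \<le> gdist E u v" unfolding D_def by linarith
  next
    fix i j assume ij: "i < n" "j < n"
    show "nat \<lfloor>?c i * D\<rfloor> \<le> nat \<lfloor>?c j * D\<rfloor> + 1"
    proof (rule nat_floor_le_Suc)
      have "L \<le> ?c i" "?c i \<le> L + 1 / 2 ^ K" "L \<le> ?c j" "?c j \<le> L + 1 / 2 ^ K"
        using L ij by auto
      then have "\<bar>?c i - ?c j\<bar> \<le> 1 / 2 ^ K" unfolding abs_le_iff by linarith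
      then have "\<bar>?c i - ?c j\<bar> * D \<le> (1 / 2 ^ K) * 2 ^ K" using D by (intro mult_mono) auto
      then show "\<bar>?c i * D - ?c j * D\<bar> \<le> 1" by (simp add: abs_mult flip: left_diff_distrib)
    qed (use c01 ij in auto)
  qed
qed

end

context gaa_execution
begin

lemma gaa_outputs_correct:
  assumes "diam V E \<le> 2 ^ K"
  defines "out \<equiv> \<lambda>i. gaa_output V E idx
                      (gaa_state idx (f div 2 + 1) (view_at n x crash dlv (f div 2 + K + 1) i))"
  shows "(\<forall>i\<in>{i. i < n \<and> crash i = None}. out i \<in> V) \<and>
    (\<forall>i\<in>{i. i < n \<and> crash i = None}. \<forall>i'\<in>{i. i < n \<and> crash i = None}.
      out i = out i' \<or> E (out i) (out i')) \<and>
    (\<forall>i\<in>{i. i < n \<and> crash i = None}. \<exists>a<n. \<exists>b<n. on_shortest_path E (x a) (x b) (out i))"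
proof -
  obtain q p where qp: "q < R1" "p < n" "{j. j < n \<and> crash j = Some (Suc q)} \<subseteq> {p}"
    by (rule exists_clean_round)
  interpret gaa_clean_execution V E n f x crash dlv idx q p
    using qp by unfold_locales
  have "out j = gaa_output V E idx (st (R1 + K) j)" for j
    unfolding out_def st_def R1_def by (simp add: ac_simps)
  with outputs_on_geodesic[OF assms(1)] obtain k where k:
    "\<And>j. j < n \<Longrightarrow> out j = geodesic E u v (k j)"
    "\<And>j. j < n \<Longrightarrow> k j \<le> gdist E u v" "\<And>i j. i < n \<Longrightarrow> j < n \<Longrightarrow> k i \<le> k j + 1"
    by metis
  note uv = G u_v_inputs(3,4)
  obtain a b where ab: "a < n" "b < n" "u = x a" "v = x b" using u_v_inputs(1,2) by blast
  have "on_shortest_path E (x a) (x b) (out i)" if "i < n" for i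
    using on_shortest_path_geodesic[OF uv k(2)[OF that]] k(1)[OF that] ab by simp
  then show ?thesis using k geodesic_in_V[OF uv] geodesic_adjacent[OF uv] ab(1,2) by auto
qed

end

theorem mainTheorem8:
  fixes V :: "'v set" and E :: "'v \<Rightarrow> 'v \<Rightarrow> bool" and n f :: nat
  assumes "finite_connected_graph V E"
    and "f < n"
  shows "\<exists>dec. solves_GAA V E n f (f div 2 + clog2 (diam V E) + 1) dec"
proof -
  have "finite V" using assms(1) unfolding finite_connected_graph_def by simp
  then obtain idx :: "'v \<Rightarrow> nat" where idx: "inj_on idx V"
    using finite_imp_inj_to_nat_seg by blast
  have "solves_GAA V E n f (f div 2 + clog2 (diam V E) + 1)
          (\<lambda>w. gaa_output V E idx (gaa_state idx (f div 2 + 1) w))"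
    unfolding solves_GAA_def Let_def
    using gaa_execution.gaa_outputs_correct[OF gaa_execution.intro[OF assms _ _ idx]
        le_two_power_clog2]
    by blast
  then show ?thesis by blast
qed

end
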